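(* Let $(X,d)$ be a compact metric space and $f\colon X\to X$ an equicontinuous map. The following are equivalent: (1) $f$ has the limit shadowing property; (2) $f$ has the shadowing property; (3) $\dim\Omega(f)=0$, equivalently $\Omega(f)$ is totally disconnected.
   Context: $f$ is equicontinuous if for every $\epsilon>0$ there is $\delta>0$ such that $d(x,y)\le\delta$ implies $\sup_{n\ge0}d(f^n(x),f^n(y))\le\epsilon$. A $\delta$-pseudo orbit is a sequence $(x_i)_{i\ge0}$ with $d(f(x_i),x_{i+1})\le\delta$ for all $i$; it is $\epsilon$-shadowed by $x$ if $d(x_i,f^i(x))\le\epsilon$ for all $i$. $f$ has the shadowing property if for every $\epsilon>0$ there is $\delta>0$ such that every $\delta$-pseudo orbit is $\epsilon$-shadowed by some point. $f$ has the limit shadowing property if for every sequence $(x_i)_{i\ge0}$ with $\lim_{i}d(f(x_i),x_{i+1})=0$ there is $y\in X$ with $\lim_i d(x_i,f^i(y))=0$. $\Omega(f)$ is the set of non-wandering points: $x$ such that for every neighborhood $U$ of $x$ there is $n>0$ with $f^n(U)\cap U\ne\emptyset$. *)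

theory Defs
  imports "HOL-Analysis.Analysis"
begin

definition equicontinuous_on :: "'a::metric_space set \<Rightarrow> ('a \<Rightarrow> 'a) \<Rightarrow> bool" where
  "equicontinuous_on X f \<longleftrightarrow>
     (\<forall>\<epsilon>>0. \<exists>\<delta>>0. \<forall>x\<in>X. \<forall>y\<in>X. dist x y \<le> \<delta> \<longrightarrow>
        (\<forall>n. dist ((f ^^ n) x) ((f ^^ n) y) \<le> \<epsilon>))"

definition pseudo_orbit :: "'a::metric_space set \<Rightarrow> ('a \<Rightarrow> 'a) \<Rightarrow> real \<Rightarrow> (nat \<Rightarrow> 'a) \<Rightarrow> bool" where
  "pseudo_orbit X f \<delta> xs \<longleftrightarrow> (\<forall>i. xs i \<in> X) \<and> (\<forall>i. dist (f (xs i)) (xs (Suc i)) \<le> \<delta>)"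

definition shadows :: "('a::metric_space \<Rightarrow> 'a) \<Rightarrow> real \<Rightarrow> (nat \<Rightarrow> 'a) \<Rightarrow> 'a \<Rightarrow> bool" where
  "shadows f \<epsilon> xs x \<longleftrightarrow> (\<forall>i. dist (xs i) ((f ^^ i) x) \<le> \<epsilon>)"

definition shadowing :: "'a::metric_space set \<Rightarrow> ('a \<Rightarrow> 'a) \<Rightarrow> bool" where
  "shadowing X f \<longleftrightarrow>
     (\<forall>\<epsilon>>0. \<exists>\<delta>>0. \<forall>xs. pseudo_orbit X f \<delta> xs \<longrightarrow> (\<exists>x\<in>X. shadows f \<epsilon> xs x))"

definition limit_shadowing :: "'a::metric_space set \<Rightarrow> ('a \<Rightarrow> 'a) \<Rightarrow> bool" where
  "limit_shadowing X f \<longleftrightarrow>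
     (\<forall>xs. (\<forall>i. xs i \<in> X) \<and> (\<lambda>i. dist (f (xs i)) (xs (Suc i))) \<longlonglongrightarrow> 0 \<longrightarrow>
        (\<exists>y\<in>X. (\<lambda>i. dist (xs i) ((f ^^ i) y)) \<longlonglongrightarrow> 0))"

text \<open>Non-wandering set; neighbourhoods are taken in the subspace topology of X.\<close>
definition nonwandering :: "'a::metric_space set \<Rightarrow> ('a \<Rightarrow> 'a) \<Rightarrow> 'a set" where
  "nonwandering X f = {x\<in>X. \<forall>U. open U \<and> x \<in> U \<longrightarrow>
       (\<exists>n>0. \<exists>y\<in>X \<inter> U. (f ^^ n) y \<in> U)}"

text \<open>Small inductive dimension at most 0: a base of relatively clopen sets.\<close>
definition zero_dimensional :: "'a::metric_space set \<Rightarrow> bool" where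
  "zero_dimensional S \<longleftrightarrow>
     (\<forall>x\<in>S. \<forall>U. open U \<and> x \<in> U \<longrightarrow>
        (\<exists>V. openin (top_of_set S) V \<and> closedin (top_of_set S) V \<and> x \<in> V \<and> V \<subseteq> U))"

definition totally_disconnected :: "'a::topological_space set \<Rightarrow> bool" where
  "totally_disconnected S \<longleftrightarrow> (\<forall>C. C \<subseteq> S \<and> connected C \<longrightarrow> (\<exists>a. C \<subseteq> {a}))"

end

theory Submission
  imports Defs
begin

text \<open>
  For an equicontinuous map the orbit distance \<open>D(x,y) = sup\<^sub>n d(f\<^sup>n x, f\<^sup>n y)\<close> is uniformly
  equivalent to \<open>d\<close>, nonwandering points are recurrent, any two of them return simultaneously
  at arbitrarily late times, and every pseudo orbit with small jumps eventually stays close to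
  \<open>\<Omega>(f)\<close>, because \<open>f\<^sup>N(X)\<close> approaches \<open>\<Omega>(f)\<close> uniformly.

  The three properties are all equivalent to the smallness of chain classes in \<open>\<Omega>(f)\<close>: for
  every \<open>\<epsilon>\<close> there is \<open>\<gamma>\<close> such that points of \<open>\<Omega>(f)\<close> joined by a \<open>\<gamma>\<close>-chain for \<open>D\<close> are
  \<open>\<epsilon>\<close>-close. Shadowing a chain, and looking at a common return time of its endpoints, shows
  that the endpoints are close; limit shadowing gives the same for a pseudo orbit that runs back
  and forth between two chain related points along chains of shrinking mesh. Conversely, if chain
  classes are small, the chain in \<open>\<Omega>(f)\<close> that follows the tail of a pseudo orbit keeps the
  pseudo orbit close to the orbit of its own initial point. Small chain classes in the compact
  set \<open>\<Omega>(f)\<close> amount to a base of clopen sets, and for compact metric spaces this is total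
  disconnectedness.
\<close>

lemma funpow_split:
  assumes "k \<le> n"
  shows "(g ^^ n) x = (g ^^ (n - k)) ((g ^^ k) x)"
proof -
  have "(g ^^ (n - k + k)) x = (g ^^ (n - k)) ((g ^^ k) x)"
    by (simp only: funpow_add o_apply)
  then show ?thesis
    using assms by simp
qed

lemma rtranclp_imp_path:
  assumes "R\<^sup>*\<^sup>* x y"
  obtains c m where "c 0 = x" "c m = y" "\<And>j. j < m \<Longrightarrow> R (c j) (c (Suc j))"
  using assms by (metis rtranclp_power relpowp_fun_conv)

lemma compact_sequence_close_pair:
  fixes u :: "nat \<Rightarrow> 'a::metric_space"
  assumes "compact K" "\<And>k. u k \<in> K" "d > 0"
  obtains i j where "i + N \<le> j" "dist (u i) (u j) < d"
proof -
  obtain l and r :: "nat \<Rightarrow> nat" where r: "strict_mono r" "(u \<circ> r) \<longlonglongrightarrow> l"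
    using compact_imp_seq_compact[OF assms(1)] assms(2) by (metis seq_compactE)
  then have "Cauchy (u \<circ> r)"
    using LIMSEQ_imp_Cauchy by blast
  then obtain M where M: "\<And>m n. M \<le> m \<Longrightarrow> M \<le> n \<Longrightarrow> dist ((u \<circ> r) m) ((u \<circ> r) n) < d"
    using assms(3) unfolding Cauchy_def by meson
  have "r M + N \<le> r (r M + N)" "M \<le> r M + N"
    using seq_suble[OF r(1)] by (auto intro: le_add1 order_trans)
  then show ?thesis
    using that[of "r M" "r (r M + N)"] M[of M "r M + N"] by simp
qed

lemma pseudo_orbit_shift:
  "pseudo_orbit X f d xs \<Longrightarrow> pseudo_orbit X f d (\<lambda>i. xs (k + i))"
  unfolding pseudo_orbit_def by simp

lemma pseudo_orbit_mono:
  "pseudo_orbit X f d xs \<Longrightarrow> d \<le> d' \<Longrightarrow> pseudo_orbit X f d' xs"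
  unfolding pseudo_orbit_def by (meson order_trans)

section \<open>Zero-dimensional compact sets\<close>

lemma zero_dimensional_imp_totally_disconnected:
  assumes "zero_dimensional S"
  shows "totally_disconnected S"
  unfolding totally_disconnected_def
proof (intro allI impI)
  fix C assume C: "C \<subseteq> S \<and> connected C"
  have "b = a" if a: "a \<in> C" and b: "b \<in> C" for a b
  proof (rule ccontr)
    assume "b \<noteq> a"
    then have "open (ball a (dist a b))" "a \<in> ball a (dist a b)" "a \<in> S"
      using a C by auto
    then obtain V where V: "openin (top_of_set S) V" "closedin (top_of_set S) V" "a \<in> V"
        "V \<subseteq> ball a (dist a b)"
      using assms unfolding zero_dimensional_def by blast
    have "openin (top_of_set C) (C \<inter> V)" "closedin (top_of_set C) (C \<inter> V)"
      using V(1,2) C by (auto simp: openin_open closedin_closed)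
    then have "C \<inter> V = {} \<or> C \<inter> V = C"
      using C connected_clopen by blast
    then show False
      using V(3,4) a b by auto
  qed
  then show "\<exists>a. C \<subseteq> {a}" by blast
qed

lemma compact_totally_disconnected_imp_zero_dimensional:
  assumes "compact S" and "totally_disconnected S"
  shows "zero_dimensional S"
  unfolding zero_dimensional_def
proof (intro ballI allI impI)
  fix x U assume x: "x \<in> S" and U: "open U \<and> x \<in> U"
  define Y where "Y = top_of_set S"
  have cpt: "compact_space Y" and haus: "Hausdorff_space Y"
    unfolding Y_def using assms(1) by (auto simp: compact_space_subtopology Hausdorff_space_subtopology)
  have "connected_component_of_set Y x = {x}"
  proof -
    have "connectedin Y (connected_component_of_set Y x)"
      by (rule connectedin_connected_component_of)
    then have "connected (connected_component_of_set Y x)" "connected_component_of_set Y x \<subseteq> S"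
      unfolding Y_def connectedin_subtopology by auto
    moreover have "x \<in> connected_component_of_set Y x"
      using x by (simp add: Y_def connected_component_of_refl)
    ultimately show ?thesis
      using assms(2) unfolding totally_disconnected_def by blast
  qed
  moreover have "x \<in> topspace Y"
    using x by (simp add: Y_def)
  ultimately have "{x} \<in> connected_components_of Y"
    unfolding connected_components_of_def by force
  then have "{x} \<in> quasi_components_of Y"
    using compact_quasi_eq_connected_components_of[OF compact_imp_locally_compact_space[OF cpt] haus] x
    by (simp add: Y_def)
  have "openin Y (S \<inter> U)"
    unfolding Y_def using U by blast
  then have "closedin Y (S - U)"
    unfolding closedin_def by (simp add: Y_def Diff_Diff_Int Int_commute)
  then have "compactin Y (S - U)"
    using closedin_compact_space cpt by blast
  moreover have "disjnt {x} (S - U)"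
    using U by auto
  ultimately have "separated_between Y {x} (S - U)"
    using separated_between_quasi_component_compact[OF \<open>{x} \<in> quasi_components_of Y\<close>] by blast
  then obtain A B where AB: "openin Y A" "openin Y B" "A \<union> B = S" "disjnt A B" "x \<in> A" "S - U \<subseteq> B"
    unfolding separated_between_def by (auto simp: Y_def)
  have "S - A = B"
    using AB(3,4) unfolding disjnt_def by blast
  then have "closedin Y A"
    unfolding closedin_def using AB(2,3) by (auto simp: Y_def)
  moreover have "A \<subseteq> U"
    using AB(3,4,6) unfolding disjnt_def by blast
  ultimately show "\<exists>V. openin (top_of_set S) V \<and> closedin (top_of_set S) V \<and> x \<in> V \<and> V \<subseteq> U"
    using AB(1,5) unfolding Y_def by blast
qed

lemma clopen_in_compact_eventually_setdist_gt:
  assumes "compact S" "openin (top_of_set S) V" "closedin (top_of_set S) V"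
  shows "eventually (\<lambda>g. setdist_gt g V (S - V)) (at_right 0)"
proof (rule compact_closed_imp_eventually_setdist_gt_at_right_0)
  show "compact V"
    using assms(1,3) closedin_compact by blast
  have "closedin (top_of_set S) (S - V)"
    using assms(2) by (simp add: closedin_def openin_imp_subset double_diff)
  then show "closed (S - V)"
    using assms(1) closedin_closed_trans compact_imp_closed by blast
qed blast

lemma compact_zero_dimensional_small_chains:
  assumes "compact S" "zero_dimensional S" "e > 0"
  obtains g where "g > 0"
    "\<And>x y. (\<lambda>a b. a \<in> S \<and> b \<in> S \<and> dist a b \<le> g)\<^sup>*\<^sup>* x y \<Longrightarrow> dist x y \<le> e"
proof -
  have "\<forall>v\<in>S. \<exists>V. openin (top_of_set S) V \<and> closedin (top_of_set S) V \<and> v \<in> V \<and> V \<subseteq> ball v (e/2)"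
    using assms(2,3) unfolding zero_dimensional_def by (metis centre_in_ball half_gt_zero open_ball)
  then obtain V where V: "\<And>v. v \<in> S \<Longrightarrow> openin (top_of_set S) (V v)"
      "\<And>v. v \<in> S \<Longrightarrow> closedin (top_of_set S) (V v)" "\<And>v. v \<in> S \<Longrightarrow> v \<in> V v"
      "\<And>v. v \<in> S \<Longrightarrow> V v \<subseteq> ball v (e/2)"
    by metis
  obtain W where W: "\<And>v. v \<in> S \<Longrightarrow> open (W v) \<and> V v = S \<inter> W v"
    using V(1) unfolding openin_open by metis
  have "S \<subseteq> (\<Union>v\<in>S. W v)"
    using V(3) W by blast
  then obtain F where F: "F \<subseteq> S" "finite F" "S \<subseteq> (\<Union>v\<in>F. W v)"
    using compactE_image[OF assms(1), of S W] W by blast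
  have "eventually (\<lambda>g. \<forall>v\<in>F. setdist_gt g (V v) (S - V v)) (at_right 0)"
    using F(1,2) V(1,2) assms(1) by (auto intro!: eventually_ball_finite clopen_in_compact_eventually_setdist_gt)
  then obtain b :: real where "b > 0" "\<And>g. 0 < g \<Longrightarrow> g < b \<Longrightarrow> \<forall>v\<in>F. setdist_gt g (V v) (S - V v)"
    unfolding eventually_at_right_field by blast
  then have g: "b/2 > 0" "\<And>v. v \<in> F \<Longrightarrow> setdist_gt (b/2) (V v) (S - V v)"
    by auto
  let ?R = "\<lambda>a b'. a \<in> S \<and> b' \<in> S \<and> dist a b' \<le> b/2"
  have stay: "?R\<^sup>*\<^sup>* x y \<Longrightarrow> x \<in> V v \<Longrightarrow> y \<in> V v" if "v \<in> F" for v x y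
  proof (induction rule: rtranclp_induct)
    case (step y z)
    then show ?case
      using setdist_gtD[OF g(2)[OF that], of y z] by fastforce
  qed
  have "dist x y \<le> e" if "?R\<^sup>*\<^sup>* x y" for x y
  proof (cases "x = y")
    case False
    then have "x \<in> S"
      using that by (auto elim: converse_rtranclpE)
    then obtain v where "v \<in> F" "x \<in> V v"
      using F(1,3) W by blast
    then have "x \<in> ball v (e/2)" "y \<in> ball v (e/2)"
      using stay[OF _ that] V(4) F(1) by blast+
    then show ?thesis
      using dist_triangle_half_l[of x v e y] by (simp add: dist_commute)
  qed (use assms(3) in simp)
  then show ?thesis
    using that g(1) by blast
qed

lemma zero_dimensional_if_small_chains:
  assumes "\<And>e. e > 0 \<Longrightarrow> \<exists>R d. d > 0 \<and> (\<forall>a\<in>S. \<forall>b\<in>S. dist a b < d \<longrightarrow> R a b)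
             \<and> (\<forall>x\<in>S. \<forall>y\<in>S. R\<^sup>*\<^sup>* x y \<longrightarrow> dist x y \<le> e)"
  shows "zero_dimensional S"
  unfolding zero_dimensional_def
proof (intro ballI allI impI)
  fix x U assume x: "x \<in> S" and U: "open U \<and> x \<in> U"
  obtain r where r: "r > 0" "ball x r \<subseteq> U"
    using U open_contains_ball by blast
  then obtain R d where d: "d > 0" "\<forall>a\<in>S. \<forall>b\<in>S. dist a b < d \<longrightarrow> R a b"
    and small: "\<forall>x\<in>S. \<forall>y\<in>S. R\<^sup>*\<^sup>* x y \<longrightarrow> dist x y \<le> r/2"
    using assms[of "r/2"] by auto
  define V where "V = {y \<in> S. R\<^sup>*\<^sup>* x y}"
  have near: "y' \<in> V \<longleftrightarrow> y \<in> V" if "y \<in> S" "y' \<in> S" "dist y' y < d" for y y'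
  proof -
    have "R y' y" "R y y'"
      using d(2) that by (simp_all add: dist_commute)
    then have "R\<^sup>*\<^sup>* x y' \<longleftrightarrow> R\<^sup>*\<^sup>* x y"
      by (meson rtranclp.rtrancl_into_rtrancl)
    then show ?thesis
      using that unfolding V_def by blast
  qed
  have "openin (top_of_set S) V"
    unfolding openin_euclidean_subtopology_iff
  proof (intro conjI ballI)
    fix y assume "y \<in> V"
    then show "\<exists>e>0. \<forall>y'\<in>S. dist y' y < e \<longrightarrow> y' \<in> V"
      using near d(1) unfolding V_def by blast
  qed (auto simp: V_def)
  moreover have "openin (top_of_set S) (S - V)"
    unfolding openin_euclidean_subtopology_iff
  proof (intro conjI ballI)
    fix y assume "y \<in> S - V"
    then show "\<exists>e>0. \<forall>y'\<in>S. dist y' y < e \<longrightarrow> y' \<in> S - V"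
      using near d(1) by blast
  qed auto
  then have "closedin (top_of_set S) V"
    unfolding closedin_def V_def by (simp add: double_diff)
  moreover have "V \<subseteq> U"
  proof
    fix y assume "y \<in> V"
    then have "dist x y < r"
      using small r(1) x unfolding V_def by fastforce
    then show "y \<in> U"
      using r(2) by auto
  qed
  moreover have "x \<in> V"
    using x unfolding V_def by simp
  ultimately show "\<exists>V. openin (top_of_set S) V \<and> closedin (top_of_set S) V \<and> x \<in> V \<and> V \<subseteq> U"
    by blast
qed

section \<open>Concatenating finite blocks\<close>

text \<open>Position \<open>(k, j)\<close>, with \<open>j \<le> M k\<close>, reached at time \<open>t\<close> when blocks with index ranges
  \<open>0..M 0\<close>, \<open>0..M 1\<close>, ... are traversed one after another.\<close>

primrec block_pos :: "(nat \<Rightarrow> nat) \<Rightarrow> nat \<Rightarrow> nat \<times> nat" where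
  "block_pos M 0 = (0, 0)"
| "block_pos M (Suc t) =
     (if snd (block_pos M t) < M (fst (block_pos M t))
      then (fst (block_pos M t), Suc (snd (block_pos M t)))
      else (Suc (fst (block_pos M t)), 0))"

lemma block_pos_fst_le: "fst (block_pos M t) \<le> t"
  by (induction t) auto

lemma block_pos_snd_le: "snd (block_pos M t) \<le> M (fst (block_pos M t))"
  by (induction t) auto

lemma block_pos_fst_mono: "t \<le> t' \<Longrightarrow> fst (block_pos M t) \<le> fst (block_pos M t')"
  by (rule lift_Suc_mono_le[of "\<lambda>t. fst (block_pos M t)"]) auto

lemma block_pos_run: "block_pos M t = (k, 0) \<Longrightarrow> j \<le> M k \<Longrightarrow> block_pos M (t + j) = (k, j)"
  by (induction j) auto

lemma block_pos_start: "\<exists>t. block_pos M t = (k, 0)"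
proof (induction k)
  case 0
  show ?case
    using block_pos.simps(1) by blast
next
  case (Suc k)
  then obtain t where "block_pos M t = (k, 0)"
    by blast
  then have "block_pos M (Suc (t + M k)) = (Suc k, 0)"
    using block_pos_run[of M t k "M k"] by simp
  then show ?case
    by blast
qed

lemma filterlim_block_pos_fst: "filterlim (\<lambda>t. fst (block_pos M t)) at_top sequentially"
  unfolding filterlim_at_top eventually_sequentially
proof
  fix k
  obtain T where "block_pos M T = (k, 0)"
    using block_pos_start by blast
  then have "k \<le> fst (block_pos M t)" if "T \<le> t" for t
    using block_pos_fst_mono[OF that, of M] by simp
  then show "\<exists>T. \<forall>t\<ge>T. k \<le> fst (block_pos M t)"
    by blast
qed

section \<open>Chains of nonwandering points and self-shadowing\<close>

definition orbit_close :: "('a::metric_space \<Rightarrow> 'a) \<Rightarrow> real \<Rightarrow> 'a \<Rightarrow> 'a \<Rightarrow> bool" where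
  "orbit_close f e a b \<longleftrightarrow> (\<forall>n. dist ((f ^^ n) a) ((f ^^ n) b) \<le> e)"

lemma orbit_closeD: "orbit_close f e a b \<Longrightarrow> dist ((f ^^ n) a) ((f ^^ n) b) \<le> e"
  unfolding orbit_close_def by blast

lemma orbit_close_dist: "orbit_close f e a b \<Longrightarrow> dist a b \<le> e"
  using orbit_closeD[of f e a b 0] by simp

lemma orbit_close_commute: "orbit_close f e a b \<longleftrightarrow> orbit_close f e b a"
  unfolding orbit_close_def by (simp add: dist_commute)

lemma orbit_close_mono: "orbit_close f e a b \<Longrightarrow> e \<le> e' \<Longrightarrow> orbit_close f e' a b"
  unfolding orbit_close_def by (meson order_trans)

lemma orbit_close_image: "orbit_close f e a b \<Longrightarrow> orbit_close f e (f a) (f b)"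
  unfolding orbit_close_def by (metis funpow_Suc_right o_apply)

definition nonwandering_step :: "'a::metric_space set \<Rightarrow> ('a \<Rightarrow> 'a) \<Rightarrow> real \<Rightarrow> 'a \<Rightarrow> 'a \<Rightarrow> bool" where
  "nonwandering_step X f e a b \<longleftrightarrow>
     a \<in> nonwandering X f \<and> b \<in> nonwandering X f \<and> orbit_close f e a b"

definition small_nonwandering_chains :: "'a::metric_space set \<Rightarrow> ('a \<Rightarrow> 'a) \<Rightarrow> bool" where
  "small_nonwandering_chains X f \<longleftrightarrow>
     (\<forall>e>0. \<exists>g>0. \<forall>x y. (nonwandering_step X f g)\<^sup>*\<^sup>* x y \<longrightarrow> dist x y \<le> e)"

definition self_shadowing :: "'a::metric_space set \<Rightarrow> ('a \<Rightarrow> 'a) \<Rightarrow> bool" where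
  "self_shadowing X f \<longleftrightarrow>
     (\<forall>e>0. \<exists>d>0. \<forall>xs. pseudo_orbit X f d xs \<longrightarrow> shadows f e xs (xs 0))"

lemma symp_nonwandering_step: "symp (nonwandering_step X f e)"
  unfolding symp_def nonwandering_step_def using orbit_close_commute by blast

lemma nonwandering_step_mono:
  "nonwandering_step X f e a b \<Longrightarrow> e \<le> e' \<Longrightarrow> nonwandering_step X f e' a b"
  unfolding nonwandering_step_def using orbit_close_mono by blast

lemma nonwandering_chain_mono:
  assumes "(nonwandering_step X f e)\<^sup>*\<^sup>* x y" "e \<le> e'"
  shows "(nonwandering_step X f e')\<^sup>*\<^sup>* x y"
  using assms(1)
  by (induction rule: rtranclp_induct)
    (auto intro: rtranclp.rtrancl_into_rtrancl nonwandering_step_mono[OF _ assms(2)])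

locale equicontinuous_system =
  fixes X :: "'a::metric_space set" and f :: "'a \<Rightarrow> 'a"
  assumes compact: "compact X" and maps_into: "f ` X \<subseteq> X" and equicontinuous: "equicontinuous_on X f"
begin

abbreviation \<Omega> where "\<Omega> \<equiv> nonwandering X f"

lemma funpow_in: "x \<in> X \<Longrightarrow> (f ^^ n) x \<in> X"
  by (induction n) (use maps_into in auto)

lemma equicontinuousE:
  assumes "e > 0"
  obtains d where "d > 0" "\<And>x y. x \<in> X \<Longrightarrow> y \<in> X \<Longrightarrow> dist x y \<le> d \<Longrightarrow> orbit_close f e x y"
  using equicontinuous assms unfolding equicontinuous_on_def orbit_close_def by meson

lemma continuous_on_funpow: "continuous_on X (f ^^ n)"
  unfolding continuous_on_iff
proof (intro ballI allI impI)
  fix x e assume "x \<in> X" "(0::real) < e"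
  obtain d where d: "d > 0" "\<And>x y. x \<in> X \<Longrightarrow> y \<in> X \<Longrightarrow> dist x y \<le> d \<Longrightarrow> orbit_close f (e/2) x y"
    using equicontinuousE[OF half_gt_zero[OF \<open>0 < e\<close>]] by blast
  have "dist ((f ^^ n) y) ((f ^^ n) x) < e" if "y \<in> X" "dist y x < d" for y
    using orbit_closeD[OF d(2)[OF that(1) \<open>x \<in> X\<close>], of n] that(2) \<open>0 < e\<close> by simp
  then show "\<exists>d>0. \<forall>y\<in>X. dist y x < d \<longrightarrow> dist ((f ^^ n) y) ((f ^^ n) x) < e"
    using d(1) by blast
qed

lemma nonwandering_subset: "\<Omega> \<subseteq> X"
  unfolding nonwandering_def by auto

lemma closed_nonwandering: "closed \<Omega>"
  unfolding closed_limpt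
proof (intro allI impI)
  fix x assume x: "x islimpt \<Omega>"
  have "x islimpt X"
    using islimpt_subset[OF x nonwandering_subset] .
  then have "x \<in> X"
    using compact compact_imp_closed unfolding closed_limpt by blast
  moreover have "\<exists>n>0. \<exists>y\<in>X \<inter> U. (f ^^ n) y \<in> U" if U: "open U" "x \<in> U" for U
  proof -
    obtain z where "z \<in> \<Omega>" "z \<in> U"
      using islimptE[OF x U(2,1)] by blast
    then show ?thesis
      using U(1) unfolding nonwandering_def by blast
  qed
  ultimately show "x \<in> \<Omega>"
    unfolding nonwandering_def by blast
qed

lemma compact_nonwandering: "compact \<Omega>"
  using compact_Int_closed[OF compact closed_nonwandering] nonwandering_subset
  by (simp add: Int_absorb1)

lemma nonwandering_if_recurrent:
  assumes "x \<in> X" "\<And>e. e > 0 \<Longrightarrow> \<exists>n>0. dist ((f ^^ n) x) x < e"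
  shows "x \<in> \<Omega>"
proof -
  have "\<exists>n>0. \<exists>y\<in>X \<inter> U. (f ^^ n) y \<in> U" if U: "open U" "x \<in> U" for U
  proof -
    obtain e where "e > 0" "ball x e \<subseteq> U"
      using U open_contains_ball by blast
    moreover obtain n where "n > 0" "dist ((f ^^ n) x) x < e"
      using assms(2) \<open>e > 0\<close> by blast
    ultimately show ?thesis
      using assms(1) U(2) by (intro exI[of _ n]) (auto simp: dist_commute)
  qed
  then show ?thesis
    using assms(1) unfolding nonwandering_def by blast
qed

lemma nonwandering_recurrent:
  assumes "x \<in> \<Omega>" "e > 0"
  shows "\<exists>n>0. dist ((f ^^ n) x) x < e"
proof -
  obtain d where d: "d > 0" "\<And>x y. x \<in> X \<Longrightarrow> y \<in> X \<Longrightarrow> dist x y \<le> d \<Longrightarrow> orbit_close f (e/2) x y"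
    using equicontinuousE[OF half_gt_zero[OF assms(2)]] by blast
  define r where "r = min d (e/2)"
  have "r > 0"
    using d(1) assms(2) by (simp add: r_def)
  then have "open (ball x r)" "x \<in> ball x r"
    by auto
  then obtain n y where n: "n > 0" "y \<in> X" "y \<in> ball x r" "(f ^^ n) y \<in> ball x r"
    using assms(1) unfolding nonwandering_def by blast
  have "x \<in> X" "dist x y \<le> d"
    using assms(1) nonwandering_subset n(3) by (auto simp: r_def)
  then have "dist ((f ^^ n) x) ((f ^^ n) y) \<le> e/2"
    using orbit_closeD[OF d(2)] n(2) by blast
  moreover have "dist ((f ^^ n) y) x < e/2"
    using n(4) by (simp add: r_def dist_commute)
  ultimately have "dist ((f ^^ n) x) x < e"
    using dist_triangle[of "(f ^^ n) x" x "(f ^^ n) y"] by linarith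
  then show ?thesis
    using n(1) by blast
qed

lemma nonwandering_recurrent_late:
  assumes "x \<in> \<Omega>" "e > 0"
  shows "\<exists>n\<ge>N. dist ((f ^^ n) x) x < e"
proof -
  define r where "r = e / (N + 2)"
  have "r > 0"
    using assms(2) by (simp add: r_def)
  then obtain d where d: "d > 0" "\<And>x y. x \<in> X \<Longrightarrow> y \<in> X \<Longrightarrow> dist x y \<le> d \<Longrightarrow> orbit_close f r x y"
    using equicontinuousE by blast
  obtain n where n: "n > 0" "dist ((f ^^ n) x) x < d"
    using nonwandering_recurrent[OF assms(1) d(1)] by blast
  have x: "x \<in> X"
    using assms(1) nonwandering_subset by blast
  have drift: "dist ((f ^^ (k * n)) x) x \<le> k * r" for k
  proof (induction k)
    case (Suc k)
    have "(f ^^ (Suc k * n)) x = (f ^^ (k * n)) ((f ^^ n) x)"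
      by (simp only: mult_Suc add.commute[of n] funpow_add o_apply)
    moreover have "orbit_close f r ((f ^^ n) x) x"
      using d(2) funpow_in x n(2) by simp
    ultimately show ?case
      using Suc orbit_closeD[of f r "(f ^^ n) x" x "k * n"]
        dist_triangle[of "(f ^^ (Suc k * n)) x" x "(f ^^ (k * n)) x"] by (simp add: algebra_simps)
  qed simp
  have "real (N + 1) * r < e"
    using assms(2) by (simp add: r_def field_simps)
  then have "dist ((f ^^ ((N + 1) * n)) x) x < e"
    using drift[of "N + 1"] by linarith
  moreover have "N \<le> (N + 1) * n"
    using n(1) mult_le_mono2[of 1 n "N + 1"] by simp
  ultimately show ?thesis
    by blast
qed

lemma nonwandering_image:
  assumes "x \<in> \<Omega>"
  shows "f x \<in> \<Omega>"
proof (rule nonwandering_if_recurrent)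
  have x: "x \<in> X"
    using assms nonwandering_subset by blast
  then show "f x \<in> X"
    using maps_into by blast
  fix e :: real assume "e > 0"
  then obtain d where d: "d > 0" "\<And>x y. x \<in> X \<Longrightarrow> y \<in> X \<Longrightarrow> dist x y \<le> d \<Longrightarrow> orbit_close f (e/2) x y"
    using equicontinuousE[OF half_gt_zero[OF \<open>e > 0\<close>]] by blast
  obtain n where n: "n > 0" "dist ((f ^^ n) x) x < d"
    using nonwandering_recurrent[OF assms d(1)] by blast
  have "orbit_close f (e/2) ((f ^^ n) x) x"
    using d(2) funpow_in x n(2) by simp
  then have "dist ((f ^^ 1) ((f ^^ n) x)) ((f ^^ 1) x) \<le> e/2"
    by (rule orbit_closeD)
  then have "dist ((f ^^ n) (f x)) (f x) < e"
    using \<open>e > 0\<close> by (simp add: funpow_swap1)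
  then show "\<exists>n>0. dist ((f ^^ n) (f x)) (f x) < e"
    using n(1) by blast
qed

lemma nonwandering_in_funpow_image:
  assumes "x \<in> \<Omega>"
  shows "x \<in> (f ^^ N) ` X"
proof -
  have "closed ((f ^^ N) ` X)"
    using compact_continuous_image[OF continuous_on_funpow compact] compact_imp_closed by blast
  moreover have "\<exists>y\<in>(f ^^ N) ` X. dist y x < e" if e: "e > 0" for e
  proof -
    obtain n where n: "n \<ge> N" "dist ((f ^^ n) x) x < e"
      using nonwandering_recurrent_late[OF assms e] by blast
    have "(f ^^ n) x = (f ^^ N) ((f ^^ (n - N)) x)"
      using funpow_split[of "n - N" n f x] n(1) by simp
    moreover have "(f ^^ (n - N)) x \<in> X"
      using funpow_in assms nonwandering_subset by blast
    ultimately show ?thesis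
      using n(2) by (metis image_eqI)
  qed
  ultimately show ?thesis
    using closed_approachable by blast
qed

lemma nonwandering_joint_recurrence:
  assumes "x \<in> \<Omega>" "y \<in> \<Omega>" "e > 0"
  shows "\<exists>n\<ge>N. dist ((f ^^ n) x) x < e \<and> dist ((f ^^ n) y) y < e"
proof -
  have "\<forall>k. \<exists>u v. u \<in> X \<and> v \<in> X \<and> (f ^^ k) u = x \<and> (f ^^ k) v = y"
    using nonwandering_in_funpow_image assms(1,2) by (metis imageE)
  then obtain u v where uv: "\<And>k. u k \<in> X" "\<And>k. v k \<in> X" "\<And>k. (f ^^ k) (u k) = x" "\<And>k. (f ^^ k) (v k) = y"
    by metis
  obtain d where d: "d > 0" "\<And>x y. x \<in> X \<Longrightarrow> y \<in> X \<Longrightarrow> dist x y \<le> d \<Longrightarrow> orbit_close f (e/2) x y"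
    using equicontinuousE[OF half_gt_zero[OF assms(3)]] by blast
  obtain i j where ij: "i + N \<le> j" "dist (u i, v i) (u j, v j) < d"
    using compact_sequence_close_pair[of "X \<times> X" "\<lambda>k. (u k, v k)" d N] compact_Times[OF compact compact] uv d(1)
    by blast
  have "dist (u i) (u j) \<le> d" "dist (v i) (v j) \<le> d"
    using ij(2) dist_fst_le[of "(u i, v i)" "(u j, v j)"] dist_snd_le[of "(u i, v i)" "(u j, v j)"] by simp_all
  then have "orbit_close f (e/2) (u i) (u j)" "orbit_close f (e/2) (v i) (v j)"
    using d(2) uv by blast+
  then have "dist ((f ^^ j) (u i)) x \<le> e/2" "dist ((f ^^ j) (v i)) y \<le> e/2"
    using orbit_closeD uv(3,4) by metis+
  moreover have "(f ^^ (j - i)) x = (f ^^ j) (u i)" "(f ^^ (j - i)) y = (f ^^ j) (v i)"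
    using funpow_split[of i j] ij(1) uv(3,4) by (metis le_add1 order_trans)+
  ultimately show ?thesis
    using ij(1) assms(3) by (intro exI[of _ "j - i"]) auto
qed

lemma nonwandering_close_if_near_common_orbit:
  assumes "e > 0"
  obtains d where "d > 0"
    "\<And>a b z s t. a \<in> \<Omega> \<Longrightarrow> b \<in> \<Omega> \<Longrightarrow> z \<in> X \<Longrightarrow> dist ((f ^^ s) a) ((f ^^ s) z) \<le> d
       \<Longrightarrow> dist ((f ^^ t) b) ((f ^^ t) z) \<le> d \<Longrightarrow> dist a b < e"
proof -
  have "e/4 > 0"
    using assms by simp
  then obtain d where d: "d > 0" "\<And>x y. x \<in> X \<Longrightarrow> y \<in> X \<Longrightarrow> dist x y \<le> d \<Longrightarrow> orbit_close f (e/4) x y"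
    using equicontinuousE by blast
  have "dist a b < e" if ab: "a \<in> \<Omega>" "b \<in> \<Omega>" and z: "z \<in> X"
    and s: "dist ((f ^^ s) a) ((f ^^ s) z) \<le> d" and t: "dist ((f ^^ t) b) ((f ^^ t) z) \<le> d" for a b z s t
  proof -
    obtain n where n: "n \<ge> s + t" "dist ((f ^^ n) a) a < e/4" "dist ((f ^^ n) b) b < e/4"
      using nonwandering_joint_recurrence[OF ab \<open>e/4 > 0\<close>] by blast
    have "a \<in> X" "b \<in> X"
      using ab nonwandering_subset by auto
    then have as: "orbit_close f (e/4) ((f ^^ s) a) ((f ^^ s) z)"
      and bt: "orbit_close f (e/4) ((f ^^ t) b) ((f ^^ t) z)"
      using d(2) s t funpow_in z by simp_all
    have "s \<le> n" "t \<le> n"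
      using n(1) by auto
    have "dist ((f ^^ n) a) ((f ^^ n) z) \<le> e/4"
      using orbit_closeD[OF as, of "n - s"] funpow_split[OF \<open>s \<le> n\<close>, of f] by simp
    moreover have "dist ((f ^^ n) b) ((f ^^ n) z) \<le> e/4"
      using orbit_closeD[OF bt, of "n - t"] funpow_split[OF \<open>t \<le> n\<close>, of f] by simp
    ultimately show ?thesis
      using n(2,3) by metric
  qed
  then show ?thesis
    using that d(1) by blast
qed

lemma nonwandering_if_limit_of_images:
  assumes "strict_mono r" "\<And>k. u k \<in> X" "(\<lambda>k. (f ^^ r k) (u k)) \<longlonglongrightarrow> q"
  shows "q \<in> \<Omega>"
proof -
  have q: "q \<in> X"
    using closed_sequentially[OF compact_imp_closed[OF compact] _ assms(3)] funpow_in assms(2) by blast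
  have "\<exists>n>0. dist ((f ^^ n) q) q < e" if e: "e > 0" for e
  proof -
    obtain d where d: "d > 0" "\<And>x y. x \<in> X \<Longrightarrow> y \<in> X \<Longrightarrow> dist x y \<le> d \<Longrightarrow> orbit_close f (e/3) x y"
      using equicontinuousE[of "e/3"] e by auto
    have "min d (e/3) > 0"
      using d(1) e by simp
    then obtain M where M: "\<And>k. k \<ge> M \<Longrightarrow> dist ((f ^^ r k) (u k)) q < min d (e/3)"
      using assms(3) unfolding lim_sequentially by blast
    obtain i j where ij: "i + 1 \<le> j" "dist (u (M + i)) (u (M + j)) < d"
      using compact_sequence_close_pair[of X "\<lambda>k. u (M + k)" d 1] compact assms(2) d(1) by blast
    define a b where "a = M + i" and "b = M + j"
    have "r a < r b"
      using ij(1) assms(1) unfolding a_def b_def strict_mono_def by simp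
    define n where "n = r b - r a"
    have "(f ^^ n) ((f ^^ r a) (u a)) = (f ^^ r b) (u a)"
      unfolding n_def using funpow_split[OF less_imp_le[OF \<open>r a < r b\<close>], of f "u a"] by simp
    moreover have "orbit_close f (e/3) q ((f ^^ r a) (u a))"
      using d(2) q funpow_in assms(2) M[of a] by (simp add: a_def dist_commute)
    ultimately have "dist ((f ^^ n) q) ((f ^^ r b) (u a)) \<le> e/3"
      using orbit_closeD by metis
    moreover have "orbit_close f (e/3) (u a) (u b)"
      using d(2) assms(2) ij(2) by (simp add: a_def b_def)
    then have "dist ((f ^^ r b) (u a)) ((f ^^ r b) (u b)) \<le> e/3"
      by (rule orbit_closeD)
    moreover have "dist ((f ^^ r b) (u b)) q < e/3"
      using M[of b] by (simp add: b_def)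
    ultimately have "dist ((f ^^ n) q) q < e"
      by metric
    then show ?thesis
      using \<open>r a < r b\<close> n_def by (intro exI[of _ n]) auto
  qed
  then show ?thesis
    using nonwandering_if_recurrent[OF q] by blast
qed

subsection \<open>Pseudo orbits approach the nonwandering set\<close>

lemma funpow_approaches_nonwandering:
  assumes "\<theta> > 0"
  obtains N where "\<And>x. x \<in> X \<Longrightarrow> \<exists>w\<in>\<Omega>. dist ((f ^^ N) x) w < \<theta>"
proof (rule ccontr)
  assume "\<not> thesis"
  have "\<exists>x. x \<in> X \<and> (\<forall>w\<in>\<Omega>. \<theta> \<le> dist ((f ^^ N) x) w)" for N
  proof -
    have "\<not> (\<forall>x. x \<in> X \<longrightarrow> (\<exists>w\<in>\<Omega>. dist ((f ^^ N) x) w < \<theta>))"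
      using that \<open>\<not> thesis\<close> by blast
    then show ?thesis
      by (auto simp: not_less)
  qed
  then obtain u where u: "\<And>N. u N \<in> X" "\<And>N w. w \<in> \<Omega> \<Longrightarrow> \<theta> \<le> dist ((f ^^ N) (u N)) w"
    by metis
  have "\<forall>N. (f ^^ N) (u N) \<in> X"
    using funpow_in u(1) by blast
  then obtain q r where "strict_mono r" "((\<lambda>N. (f ^^ N) (u N)) \<circ> r) \<longlonglongrightarrow> q"
    using seq_compactE[OF compact_imp_seq_compact[OF compact]] by metis
  then have r: "strict_mono r" "(\<lambda>k. (f ^^ r k) (u (r k))) \<longlonglongrightarrow> q"
    by (simp_all add: comp_def)
  have "q \<in> \<Omega>"
    using nonwandering_if_limit_of_images[OF r(1) _ r(2)] u(1) by blast
  moreover obtain k where "dist ((f ^^ r k) (u (r k))) q < \<theta>"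
    using r(2) assms unfolding lim_sequentially by blast
  ultimately show False
    using u(2) by (simp add: not_le[symmetric])
qed

lemma pseudo_orbit_drift:
  assumes "\<theta> > 0"
  obtains d where "d > 0"
    "\<And>xs i k. pseudo_orbit X f d xs \<Longrightarrow> k \<le> N \<Longrightarrow> dist ((f ^^ k) (xs i)) (xs (i + k)) < \<theta>"
proof -
  define \<rho> where "\<rho> = \<theta> / (N + 1)"
  have \<rho>: "\<rho> > 0" "real N * \<rho> < \<theta>"
    using assms by (auto simp: \<rho>_def field_simps)
  obtain d where d: "d > 0" "\<And>x y. x \<in> X \<Longrightarrow> y \<in> X \<Longrightarrow> dist x y \<le> d \<Longrightarrow> orbit_close f \<rho> x y"
    using equicontinuousE[OF \<rho>(1)] by blast
  have drift: "dist ((f ^^ k) (xs i)) (xs (i + k)) \<le> real k * \<rho>" if xs: "pseudo_orbit X f d xs" for xs i k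
  proof (induction k arbitrary: i)
    case (Suc k)
    have "orbit_close f \<rho> (f (xs i)) (xs (Suc i))"
      using d(2) xs maps_into unfolding pseudo_orbit_def by blast
    then have "dist ((f ^^ k) (f (xs i))) ((f ^^ k) (xs (Suc i))) \<le> \<rho>"
      by (rule orbit_closeD)
    moreover have "(f ^^ Suc k) (xs i) = (f ^^ k) (f (xs i))"
      by (simp only: funpow_Suc_right o_apply)
    ultimately show ?case
      using Suc.IH[of "Suc i"] dist_triangle[of "(f ^^ k) (f (xs i))" "xs (Suc i + k)" "(f ^^ k) (xs (Suc i))"]
      by (simp add: algebra_simps)
  qed simp
  have "dist ((f ^^ k) (xs i)) (xs (i + k)) < \<theta>" if "pseudo_orbit X f d xs" "k \<le> N" for xs i k
  proof -
    have "real k * \<rho> \<le> real N * \<rho>"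
      using that(2) \<rho>(1) by simp
    then show ?thesis
      using drift[OF that(1), of k i] \<rho>(2) by linarith
  qed
  then show ?thesis
    using that d(1) by blast
qed

lemma pseudo_orbit_approaches_nonwandering:
  assumes "\<theta> > 0"
  obtains N d where "d > 0"
    "\<And>xs i. pseudo_orbit X f d xs \<Longrightarrow> N \<le> i \<Longrightarrow> \<exists>w\<in>\<Omega>. dist (xs i) w < \<theta>"
proof -
  obtain N where N: "\<And>x. x \<in> X \<Longrightarrow> \<exists>w\<in>\<Omega>. dist ((f ^^ N) x) w < \<theta>/2"
    using funpow_approaches_nonwandering[of "\<theta>/2"] assms by auto
  obtain d where d: "d > 0"
    "\<And>xs i k. pseudo_orbit X f d xs \<Longrightarrow> k \<le> N \<Longrightarrow> dist ((f ^^ k) (xs i)) (xs (i + k)) < \<theta>/2"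
    using pseudo_orbit_drift[of "\<theta>/2" N] assms by auto
  have "\<exists>w\<in>\<Omega>. dist (xs i) w < \<theta>" if xs: "pseudo_orbit X f d xs" and i: "N \<le> i" for xs i
  proof -
    obtain w where w: "w \<in> \<Omega>" "dist ((f ^^ N) (xs (i - N))) w < \<theta>/2"
      using N xs unfolding pseudo_orbit_def by blast
    moreover have "dist ((f ^^ N) (xs (i - N))) (xs i) < \<theta>/2"
      using d(2)[OF xs order_refl, of "i - N"] i by simp
    ultimately have "dist (xs i) w < \<theta>"
      by metric
    then show ?thesis
      using w(1) by blast
  qed
  then show ?thesis
    using that d(1) by blast
qed

subsection \<open>Shadowing and small chain classes\<close>

lemma nonwandering_step_if_close:
  assumes "g > 0"
  obtains d where "d > 0" "\<And>a b. a \<in> \<Omega> \<Longrightarrow> b \<in> \<Omega> \<Longrightarrow> dist a b \<le> d \<Longrightarrow> nonwandering_step X f g a b"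
proof -
  obtain d where "d > 0" "\<And>x y. x \<in> X \<Longrightarrow> y \<in> X \<Longrightarrow> dist x y \<le> d \<Longrightarrow> orbit_close f g x y"
    using equicontinuousE[OF assms] by blast
  then show ?thesis
    using that nonwandering_subset unfolding nonwandering_step_def by blast
qed

lemma nonwandering_chain_image:
  assumes "(nonwandering_step X f g)\<^sup>*\<^sup>* x y"
  shows "(nonwandering_step X f g)\<^sup>*\<^sup>* (f x) (f y)"
  using assms
proof (induction rule: rtranclp_induct)
  case (step y z)
  then have "nonwandering_step X f g (f y) (f z)"
    using nonwandering_image orbit_close_image unfolding nonwandering_step_def by blast
  then show ?case
    by (rule rtranclp.rtrancl_into_rtrancl[OF step.IH])
qed (rule rtranclp.rtrancl_refl)

lemma nonwandering_chain_endpoints: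
  assumes "(nonwandering_step X f g)\<^sup>*\<^sup>* x y" "x \<noteq> y"
  shows "x \<in> \<Omega>" "y \<in> \<Omega>"
  using assms by (auto elim: converse_rtranclpE rtranclp.cases simp: nonwandering_step_def)

lemma nonwandering_chain_path:
  assumes "(nonwandering_step X f g)\<^sup>*\<^sup>* x y" "x \<noteq> y"
  obtains c m where "c 0 = x" "c m = y" "\<And>j. j \<le> m \<Longrightarrow> c j \<in> \<Omega>"
    "\<And>j. j < m \<Longrightarrow> orbit_close f g (c j) (c (Suc j))"
proof -
  obtain c m where c: "c 0 = x" "c m = y" "\<And>j. j < m \<Longrightarrow> nonwandering_step X f g (c j) (c (Suc j))"
    using rtranclp_imp_path[OF assms(1)] by blast
  have "c j \<in> \<Omega>" if "j \<le> m" for j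
  proof (cases "j < m")
    case True
    then show ?thesis
      using c(3) unfolding nonwandering_step_def by blast
  next
    case False
    then show ?thesis
      using that c(2) nonwandering_chain_endpoints[OF assms] by simp
  qed
  then show ?thesis
    using that c unfolding nonwandering_step_def by blast
qed

lemma shadowing_imp_small_nonwandering_chains:
  assumes "shadowing X f"
  shows "small_nonwandering_chains X f"
  unfolding small_nonwandering_chains_def
proof (intro allI impI)
  fix e :: real assume "e > 0"
  obtain d where d: "d > 0"
    "\<And>a b z s t. a \<in> \<Omega> \<Longrightarrow> b \<in> \<Omega> \<Longrightarrow> z \<in> X \<Longrightarrow> dist ((f ^^ s) a) ((f ^^ s) z) \<le> d
       \<Longrightarrow> dist ((f ^^ t) b) ((f ^^ t) z) \<le> d \<Longrightarrow> dist a b < e"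
    using nonwandering_close_if_near_common_orbit[OF \<open>e > 0\<close>] by blast
  obtain g where g: "g > 0" "\<And>xs. pseudo_orbit X f g xs \<Longrightarrow> \<exists>z\<in>X. shadows f d xs z"
    using assms d(1) unfolding shadowing_def by meson
  have "dist x y \<le> e" if chain: "(nonwandering_step X f g)\<^sup>*\<^sup>* x y" for x y
  proof (cases "x = y")
    case False
    then obtain c m where c: "c 0 = x" "c m = y" "\<And>j. j \<le> m \<Longrightarrow> c j \<in> \<Omega>"
      "\<And>j. j < m \<Longrightarrow> orbit_close f g (c j) (c (Suc j))"
      using nonwandering_chain_path[OF chain] by blast
    define p where "p i = (f ^^ i) (c (min i m))" for i
    have "pseudo_orbit X f g p"
      unfolding pseudo_orbit_def
    proof (intro conjI allI)
      show "p i \<in> X" for i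
        unfolding p_def using c(3) nonwandering_subset funpow_in by (meson min.cobounded2 subsetD)
      show "dist (f (p i)) (p (Suc i)) \<le> g" for i
        using orbit_closeD[OF c(4), of i "Suc i"] g(1) by (cases "i < m") (simp_all add: p_def min_def)
    qed
    then obtain z where z: "z \<in> X" "shadows f d p z"
      using g(2) by blast
    have "dist ((f ^^ 0) x) ((f ^^ 0) z) \<le> d" "dist ((f ^^ m) y) ((f ^^ m) z) \<le> d"
      using z(2) c(1,2) unfolding shadows_def p_def by (metis min.idem min_0L)+
    then show ?thesis
      using d(2)[of x y z 0 m] c(1-3) z(1) by fastforce
  qed (simp add: \<open>e > 0\<close> less_imp_le)
  then show "\<exists>g>0. \<forall>x y. (nonwandering_step X f g)\<^sup>*\<^sup>* x y \<longrightarrow> dist x y \<le> e"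
    using g(1) by blast
qed

lemma nonwandering_chain_along_pseudo_orbit:
  assumes "g > 0"
  obtains \<delta> where "\<delta> > 0"
    "\<And>xs w N j. pseudo_orbit X f \<delta> xs \<Longrightarrow> (\<And>i. N \<le> i \<Longrightarrow> w i \<in> \<Omega> \<and> dist (xs i) (w i) < \<delta>)
       \<Longrightarrow> (nonwandering_step X f g)\<^sup>*\<^sup>* ((f ^^ j) (w N)) (w (N + j))"
proof -
  obtain d where d: "d > 0" "\<And>a b. a \<in> \<Omega> \<Longrightarrow> b \<in> \<Omega> \<Longrightarrow> dist a b \<le> d \<Longrightarrow> nonwandering_step X f g a b"
    using nonwandering_step_if_close[OF assms] by blast
  obtain r where r: "r > 0" "\<And>x y. x \<in> X \<Longrightarrow> y \<in> X \<Longrightarrow> dist x y \<le> r \<Longrightarrow> orbit_close f (d/3) x y"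
    using equicontinuousE[of "d/3"] d(1) by auto
  define \<delta> where "\<delta> = min r (d/3)"
  have "(nonwandering_step X f g)\<^sup>*\<^sup>* ((f ^^ j) (w N)) (w (N + j))"
    if xs: "pseudo_orbit X f \<delta> xs" and w: "\<And>i. N \<le> i \<Longrightarrow> w i \<in> \<Omega> \<and> dist (xs i) (w i) < \<delta>" for xs w N j
  proof (induction j)
    case (Suc j)
    let ?i = "N + j"
    have "w ?i \<in> X" "xs ?i \<in> X"
      using w[of ?i] nonwandering_subset xs unfolding pseudo_orbit_def by auto
    then have "dist (f (w ?i)) (f (xs ?i)) \<le> d/3"
      using orbit_closeD[of f "d/3" _ _ 1] r(2) w[of ?i] by (simp add: \<delta>_def dist_commute)
    moreover have "dist (f (xs ?i)) (xs (Suc ?i)) \<le> d/3" "dist (xs (Suc ?i)) (w (Suc ?i)) < d/3"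
      using xs w[of "Suc ?i"] unfolding pseudo_orbit_def \<delta>_def by auto
    ultimately have "dist (f (w ?i)) (w (Suc ?i)) \<le> d"
      by metric
    then have "nonwandering_step X f g (f (w ?i)) (w (Suc ?i))"
      using d(2) nonwandering_image w by simp
    moreover have "(nonwandering_step X f g)\<^sup>*\<^sup>* ((f ^^ Suc j) (w N)) (f (w ?i))"
      using nonwandering_chain_image[OF Suc.IH] by simp
    ultimately show ?case
      by simp
  qed simp
  moreover have "\<delta> > 0"
    using r(1) d(1) by (simp add: \<delta>_def)
  ultimately show ?thesis
    using that by blast
qed

lemma small_nonwandering_chains_tail_shadowing:
  assumes "small_nonwandering_chains X f" "e > 0"
  obtains \<theta> where "\<theta> > 0" "\<theta> \<le> e"
    "\<And>xs w N k. pseudo_orbit X f \<theta> xs \<Longrightarrow> (\<And>i. N \<le> i \<Longrightarrow> w i \<in> \<Omega> \<and> dist (xs i) (w i) < \<theta>)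
       \<Longrightarrow> dist ((f ^^ N) (xs 0)) (xs N) < \<theta> \<Longrightarrow> N \<le> k \<Longrightarrow> dist ((f ^^ k) (xs 0)) (xs k) \<le> e"
proof -
  have "e/3 > 0"
    using assms(2) by simp
  then obtain r where r: "r > 0" "\<And>x y. x \<in> X \<Longrightarrow> y \<in> X \<Longrightarrow> dist x y \<le> r \<Longrightarrow> orbit_close f (e/3) x y"
    using equicontinuousE by blast
  obtain g where g: "g > 0" "\<And>x y. (nonwandering_step X f g)\<^sup>*\<^sup>* x y \<Longrightarrow> dist x y \<le> e/3"
    using assms(1)[unfolded small_nonwandering_chains_def, rule_format, OF \<open>e/3 > 0\<close>] by auto
  obtain \<delta> where \<delta>: "\<delta> > 0"
    "\<And>xs w N j. pseudo_orbit X f \<delta> xs \<Longrightarrow> (\<And>i. N \<le> i \<Longrightarrow> w i \<in> \<Omega> \<and> dist (xs i) (w i) < \<delta>)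
       \<Longrightarrow> (nonwandering_step X f g)\<^sup>*\<^sup>* ((f ^^ j) (w N)) (w (N + j))"
    using nonwandering_chain_along_pseudo_orbit[OF g(1)] by blast
  define \<theta> where "\<theta> = min (r/2) (min \<delta> (e/3))"
  have \<theta>: "\<theta> > 0" "2 * \<theta> \<le> r" "\<theta> \<le> \<delta>" "\<theta> \<le> e/3"
    using r(1) \<delta>(1) assms(2) by (auto simp: \<theta>_def)
  have "dist ((f ^^ k) (xs 0)) (xs k) \<le> e"
    if xs: "pseudo_orbit X f \<theta> xs" and w: "\<And>i. N \<le> i \<Longrightarrow> w i \<in> \<Omega> \<and> dist (xs i) (w i) < \<theta>"
      and start: "dist ((f ^^ N) (xs 0)) (xs N) < \<theta>" and "N \<le> k" for xs w N k
  proof -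
    define j where "j = k - N"
    have k: "k = N + j"
      using \<open>N \<le> k\<close> by (simp add: j_def)
    have "dist ((f ^^ N) (xs 0)) (w N) \<le> r"
      using start w[OF order_refl] \<theta>(2) by metric
    moreover have "(f ^^ N) (xs 0) \<in> X" "w N \<in> X"
      using funpow_in w[of N] nonwandering_subset xs unfolding pseudo_orbit_def by auto
    ultimately have "orbit_close f (e/3) ((f ^^ N) (xs 0)) (w N)"
      using r(2) by blast
    then have "dist ((f ^^ j) ((f ^^ N) (xs 0))) ((f ^^ j) (w N)) \<le> e/3"
      by (rule orbit_closeD)
    moreover have "(f ^^ k) (xs 0) = (f ^^ j) ((f ^^ N) (xs 0))"
      unfolding k by (simp only: add.commute[of N] funpow_add o_apply)
    moreover have "pseudo_orbit X f \<delta> xs" "\<And>i. N \<le> i \<Longrightarrow> w i \<in> \<Omega> \<and> dist (xs i) (w i) < \<delta>"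
      using pseudo_orbit_mono[OF xs \<theta>(3)] w \<theta>(3) by fastforce+
    then have "(nonwandering_step X f g)\<^sup>*\<^sup>* ((f ^^ j) (w N)) (w (N + j))"
      by (rule \<delta>(2))
    then have "dist ((f ^^ j) (w N)) (w k) \<le> e/3"
      using g(2) k by blast
    moreover have "dist (w k) (xs k) < e/3"
      using w[of k] \<theta>(4) k by (simp add: dist_commute)
    ultimately show ?thesis
      by metric
  qed
  moreover have "\<theta> \<le> e"
    using \<theta>(4) assms(2) by simp
  ultimately show ?thesis
    using that \<theta>(1) by blast
qed

lemma small_nonwandering_chains_imp_self_shadowing:
  assumes "small_nonwandering_chains X f"
  shows "self_shadowing X f"
  unfolding self_shadowing_def
proof (intro allI impI)
  fix e :: real assume "e > 0"
  then obtain \<theta> where \<theta>: "\<theta> > 0" "\<theta> \<le> e"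
    "\<And>xs w N k. pseudo_orbit X f \<theta> xs \<Longrightarrow> (\<And>i. N \<le> i \<Longrightarrow> w i \<in> \<Omega> \<and> dist (xs i) (w i) < \<theta>)
       \<Longrightarrow> dist ((f ^^ N) (xs 0)) (xs N) < \<theta> \<Longrightarrow> N \<le> k \<Longrightarrow> dist ((f ^^ k) (xs 0)) (xs k) \<le> e"
    using small_nonwandering_chains_tail_shadowing[OF assms] by blast
  obtain N d1 where d1: "d1 > 0" "\<And>xs i. pseudo_orbit X f d1 xs \<Longrightarrow> N \<le> i \<Longrightarrow> \<exists>w\<in>\<Omega>. dist (xs i) w < \<theta>"
    using pseudo_orbit_approaches_nonwandering[OF \<theta>(1)] by metis
  obtain d2 where d2: "d2 > 0"
    "\<And>xs i k. pseudo_orbit X f d2 xs \<Longrightarrow> k \<le> N \<Longrightarrow> dist ((f ^^ k) (xs i)) (xs (i + k)) < \<theta>"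
    using pseudo_orbit_drift[OF \<theta>(1)] by blast
  define d where "d = min \<theta> (min d1 d2)"
  have "shadows f e xs (xs 0)" if xs: "pseudo_orbit X f d xs" for xs
  proof -
    have po: "pseudo_orbit X f \<theta> xs" "pseudo_orbit X f d1 xs" "pseudo_orbit X f d2 xs"
      using pseudo_orbit_mono[OF xs] by (simp_all add: d_def)
    have "\<forall>i. \<exists>w. N \<le> i \<longrightarrow> w \<in> \<Omega> \<and> dist (xs i) w < \<theta>"
      using d1(2)[OF po(2)] by blast
    then obtain w where w: "\<And>i. N \<le> i \<Longrightarrow> w i \<in> \<Omega> \<and> dist (xs i) (w i) < \<theta>"
      by metis
    have "dist ((f ^^ k) (xs 0)) (xs k) \<le> e" for k
    proof (cases "k \<le> N")
      case True
      then show ?thesis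
        using d2(2)[OF po(3) True, of 0] \<theta>(2) by simp
    next
      case False
      then show ?thesis
        using \<theta>(3)[OF po(1) w] d2(2)[OF po(3) order_refl, of 0] by simp
    qed
    then show ?thesis
      unfolding shadows_def by (simp add: dist_commute)
  qed
  moreover have "d > 0"
    using \<theta>(1) d1(1) d2(1) by (simp add: d_def)
  ultimately show "\<exists>d>0. \<forall>xs. pseudo_orbit X f d xs \<longrightarrow> shadows f e xs (xs 0)"
    by blast
qed

lemma self_shadowing_imp_shadowing:
  assumes "self_shadowing X f"
  shows "shadowing X f"
  unfolding shadowing_def
proof (intro allI impI)
  fix e :: real assume "e > 0"
  then obtain d where "d > 0" "\<And>xs. pseudo_orbit X f d xs \<Longrightarrow> shadows f e xs (xs 0)"
    using assms[unfolded self_shadowing_def, rule_format, of e] by auto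
  moreover have "xs 0 \<in> X" if "pseudo_orbit X f d xs" for xs
    using that unfolding pseudo_orbit_def by blast
  ultimately show "\<exists>d>0. \<forall>xs. pseudo_orbit X f d xs \<longrightarrow> (\<exists>x\<in>X. shadows f e xs x)"
    by blast
qed

lemma asymptotically_shadowed_if_eventually_shadowed:
  assumes "\<And>e. e > 0 \<Longrightarrow> \<exists>y\<in>X. \<exists>K. \<forall>i\<ge>K. dist (xs i) ((f ^^ i) y) \<le> e"
  shows "\<exists>z\<in>X. (\<lambda>i. dist (xs i) ((f ^^ i) z)) \<longlonglongrightarrow> 0"
proof -
  have "\<exists>y K. y \<in> X \<and> (\<forall>i\<ge>K. dist (xs i) ((f ^^ i) y) \<le> 1 / real (Suc j))" for j
    using assms[of "1 / real (Suc j)"] by auto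
  then obtain y K where y: "\<And>j. y j \<in> X" and K: "\<And>j i. K j \<le> i \<Longrightarrow> dist (xs i) ((f ^^ i) (y j)) \<le> 1 / real (Suc j)"
    by metis
  obtain z r where z: "z \<in> X" "strict_mono r" "(y \<circ> r) \<longlonglongrightarrow> z"
    using seq_compactE[OF compact_imp_seq_compact[OF compact]] y by metis
  have "\<exists>K. \<forall>i\<ge>K. norm (dist (xs i) ((f ^^ i) z) - 0) < \<eta>" if "\<eta> > 0" for \<eta>
  proof -
    obtain d where d: "d > 0" "\<And>x y. x \<in> X \<Longrightarrow> y \<in> X \<Longrightarrow> dist x y \<le> d \<Longrightarrow> orbit_close f (\<eta>/2) x y"
      using equicontinuousE[OF half_gt_zero[OF \<open>\<eta> > 0\<close>]] by blast
    obtain j0 where j0: "inverse (real (Suc j0)) < \<eta>/2"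
      using reals_Archimedean \<open>\<eta> > 0\<close> half_gt_zero by blast
    obtain M where M: "\<And>k. M \<le> k \<Longrightarrow> dist (y (r k)) z < d"
      using z(3) d(1) unfolding lim_sequentially by auto
    define j where "j = r (max M j0)"
    have "j0 \<le> j"
      using seq_suble[OF z(2), of "max M j0"] by (simp add: j_def)
    then have "1 / real (Suc j) \<le> 1 / real (Suc j0)"
      by (simp add: frac_le)
    then have j: "1 / real (Suc j) < \<eta>/2"
      using j0 by (simp add: inverse_eq_divide)
    have "orbit_close f (\<eta>/2) (y j) z"
      using d(2) y z(1) M[of "max M j0"] by (simp add: j_def)
    then have "dist (xs i) ((f ^^ i) z) < \<eta>" if "K j \<le> i" for i
      using K[OF that] j orbit_closeD[of f "\<eta>/2" "y j" z i] by metric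
    then show ?thesis
      by auto
  qed
  then have "(\<lambda>i. dist (xs i) ((f ^^ i) z)) \<longlonglongrightarrow> 0"
    by (rule LIMSEQ_I)
  then show ?thesis
    using z(1) by blast
qed

lemma self_shadowing_tail_shadowed_from_nonwandering:
  assumes "self_shadowing X f" "e > 0"
  obtains N d where "d > 0"
    "\<And>xs. pseudo_orbit X f d xs \<Longrightarrow> \<exists>w\<in>\<Omega>. \<forall>k. dist (xs (N + k)) ((f ^^ k) w) \<le> e"
proof -
  obtain r where r: "r > 0" "\<And>x y. x \<in> X \<Longrightarrow> y \<in> X \<Longrightarrow> dist x y \<le> r \<Longrightarrow> orbit_close f (e/2) x y"
    using equicontinuousE[OF half_gt_zero[OF assms(2)]] by blast
  obtain ds where ds: "ds > 0" "\<And>xs. pseudo_orbit X f ds xs \<Longrightarrow> shadows f (e/2) xs (xs 0)"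
    using assms(1)[unfolded self_shadowing_def, rule_format, of "e/2"] assms(2) by auto
  obtain N d1 where d1: "d1 > 0" "\<And>xs i. pseudo_orbit X f d1 xs \<Longrightarrow> N \<le> i \<Longrightarrow> \<exists>w\<in>\<Omega>. dist (xs i) w < r"
    using pseudo_orbit_approaches_nonwandering[OF r(1)] by metis
  have tail: "\<exists>w\<in>\<Omega>. \<forall>k. dist (xs (N + k)) ((f ^^ k) w) \<le> e" if xs: "pseudo_orbit X f (min ds d1) xs" for xs
  proof -
    have po: "pseudo_orbit X f ds xs" "pseudo_orbit X f d1 xs"
      using pseudo_orbit_mono[OF xs] by simp_all
    obtain w where w: "w \<in> \<Omega>" "dist (xs N) w < r"
      using d1(2)[OF po(2) order_refl] by auto
    have "xs N \<in> X" "w \<in> X"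
      using xs w(1) nonwandering_subset unfolding pseudo_orbit_def by auto
    then have "orbit_close f (e/2) (xs N) w"
      using r(2) w(2) by simp
    then have orbit: "dist ((f ^^ k) (xs N)) ((f ^^ k) w) \<le> e/2" for k
      by (rule orbit_closeD)
    have "shadows f (e/2) (\<lambda>k. xs (N + k)) (xs N)"
      using ds(2)[OF pseudo_orbit_shift[OF po(1), of N]] by simp
    then have shadow: "dist (xs (N + k)) ((f ^^ k) (xs N)) \<le> e/2" for k
      unfolding shadows_def by simp
    have "dist (xs (N + k)) ((f ^^ k) w) \<le> e" for k
      using orbit[of k] shadow[of k] by metric
    then show ?thesis
      using w(1) by blast
  qed
  show ?thesis
    by (rule that[of "min ds d1" N]) (use ds(1) d1(1) tail in auto)
qed

lemma self_shadowing_imp_limit_shadowing: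
  assumes "self_shadowing X f"
  shows "limit_shadowing X f"
  unfolding limit_shadowing_def
proof (intro allI impI)
  fix xs assume "(\<forall>i. xs i \<in> X) \<and> (\<lambda>i. dist (f (xs i)) (xs (Suc i))) \<longlonglongrightarrow> 0"
  then have xs: "\<And>i. xs i \<in> X" and err: "(\<lambda>i. dist (f (xs i)) (xs (Suc i))) \<longlonglongrightarrow> 0"
    by auto
  have "\<exists>y\<in>X. \<exists>K. \<forall>i\<ge>K. dist (xs i) ((f ^^ i) y) \<le> e" if e: "e > 0" for e
  proof -
    obtain N d where d: "d > 0"
      "\<And>xs. pseudo_orbit X f d xs \<Longrightarrow> \<exists>w\<in>\<Omega>. \<forall>k. dist (xs (N + k)) ((f ^^ k) w) \<le> e"
      using self_shadowing_tail_shadowed_from_nonwandering[OF assms e] by metis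
    obtain K0 where "\<forall>i\<ge>K0. dist (dist (f (xs i)) (xs (Suc i))) 0 < d"
      using err d(1) unfolding lim_sequentially by blast
    then have "pseudo_orbit X f d (\<lambda>i. xs (K0 + i))"
      unfolding pseudo_orbit_def using xs by (simp add: less_imp_le)
    then obtain w where w: "w \<in> \<Omega>" "\<And>k. dist (xs (K0 + (N + k))) ((f ^^ k) w) \<le> e"
      using d(2) by blast
    obtain y where y: "y \<in> X" "(f ^^ (K0 + N)) y = w"
      using nonwandering_in_funpow_image[OF w(1), of "K0 + N"] by (metis imageE)
    have "dist (xs i) ((f ^^ i) y) \<le> e" if "K0 + N \<le> i" for i
    proof -
      define k where "k = i - (K0 + N)"
      have i: "i = K0 + (N + k)"
        using that by (simp add: k_def)
      have "(f ^^ i) y = (f ^^ k) w"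
        unfolding i y(2)[symmetric] by (simp only: add.assoc[symmetric] add.commute[of "K0 + N"] funpow_add o_apply)
      then show ?thesis
        using w(2)[of k] i by simp
    qed
    then show ?thesis
      using y(1) by blast
  qed
  then show "\<exists>y\<in>X. (\<lambda>i. dist (xs i) ((f ^^ i) y)) \<longlonglongrightarrow> 0"
    by (rule asymptotically_shadowed_if_eventually_shadowed)
qed

subsection \<open>Limit shadowing\<close>

lemma glued_pseudo_orbit:
  assumes "\<And>k. C k (M k) = C (Suc k) 0" "\<And>k j. j \<le> M k \<Longrightarrow> C k j \<in> X"
    "\<And>k j. j < M k \<Longrightarrow> orbit_close f (g k) (C k j) (C k (Suc j))" "\<And>k. g k \<ge> 0"
    and p: "\<And>t. p t = (f ^^ t) (C (fst (block_pos M t)) (snd (block_pos M t)))"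
  shows "p t \<in> X" "dist (f (p t)) (p (Suc t)) \<le> g (fst (block_pos M t))"
proof -
  define k j where "k = fst (block_pos M t)" and "j = snd (block_pos M t)"
  show "p t \<in> X"
    using assms(2) block_pos_snd_le funpow_in p by simp
  show "dist (f (p t)) (p (Suc t)) \<le> g k"
  proof (cases "j < M k")
    case True
    then have "p (Suc t) = (f ^^ Suc t) (C k (Suc j))"
      by (simp add: p k_def j_def)
    moreover have "f (p t) = (f ^^ Suc t) (C k j)"
      by (simp add: p k_def j_def)
    ultimately show ?thesis
      using orbit_closeD[OF assms(3)[OF True], of "Suc t"] by (simp only:)
  next
    case False
    then have "j = M k" "block_pos M (Suc t) = (Suc k, 0)"
      using block_pos_snd_le[of M t] by (auto simp: k_def j_def)
    then have "f (p t) = p (Suc t)"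
      using assms(1) by (simp add: p k_def j_def)
    then show ?thesis
      using assms(4) by simp
  qed
qed

lemma nonwandering_chain_related_limit:
  assumes "g > 0" "x \<longlonglongrightarrow> a" "y \<longlonglongrightarrow> b" "s \<longlonglongrightarrow> 0" "a \<in> \<Omega>" "b \<in> \<Omega>"
    and chains: "\<And>k. x k \<in> \<Omega>" "\<And>k. y k \<in> \<Omega>" "\<And>k. (nonwandering_step X f (s k))\<^sup>*\<^sup>* (x k) (y k)"
  shows "(nonwandering_step X f g)\<^sup>*\<^sup>* a b"
proof -
  obtain d where d: "d > 0" "\<And>a b. a \<in> \<Omega> \<Longrightarrow> b \<in> \<Omega> \<Longrightarrow> dist a b \<le> d \<Longrightarrow> nonwandering_step X f g a b"
    using nonwandering_step_if_close[OF assms(1)] by blast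
  have "eventually (\<lambda>k. dist (x k) a < d \<and> dist (y k) b < d \<and> s k < g) sequentially"
    using assms(2,3) d(1) order_tendstoD(2)[OF assms(4,1)] by (intro eventually_conj) (auto simp: tendsto_iff)
  then obtain k where k: "dist (x k) a < d" "dist (y k) b < d" "s k < g"
    unfolding eventually_sequentially by blast
  then have "nonwandering_step X f g a (x k)" "nonwandering_step X f g (y k) b"
    using d(2) assms(5,6) chains(1,2) by (simp_all add: dist_commute)
  moreover have "(nonwandering_step X f g)\<^sup>*\<^sup>* (x k) (y k)"
    using nonwandering_chain_mono[OF chains(3)] k(3) by simp
  ultimately show ?thesis
    by (meson converse_rtranclp_into_rtranclp rtranclp.rtrancl_into_rtrancl)
qed

lemma nonwandering_chain_related_pair:
  assumes "\<not> small_nonwandering_chains X f"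
  obtains a b where "a \<in> \<Omega>" "b \<in> \<Omega>" "a \<noteq> b" "\<And>g. g > 0 \<Longrightarrow> (nonwandering_step X f g)\<^sup>*\<^sup>* a b"
proof -
  obtain e where e: "e > 0" "\<forall>g>0. \<not> (\<forall>x y. (nonwandering_step X f g)\<^sup>*\<^sup>* x y \<longrightarrow> dist x y \<le> e)"
    using assms unfolding small_nonwandering_chains_def by blast
  have "\<exists>x y. (nonwandering_step X f (1 / Suc k))\<^sup>*\<^sup>* x y \<and> e < dist x y" for k
    using e(2)[rule_format, of "1 / Suc k"] by (simp add: not_le)
  then obtain x y where xy: "\<And>k. (nonwandering_step X f (1 / Suc k))\<^sup>*\<^sup>* (x k) (y k)" "\<And>k. e < dist (x k) (y k)"
    by metis
  have "x k \<noteq> y k" for k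
    using xy(2)[of k] e(1) by auto
  then have xy\<Omega>: "x k \<in> \<Omega>" "y k \<in> \<Omega>" for k
    using nonwandering_chain_endpoints[OF xy(1)] by auto
  then have "\<forall>k. (x k, y k) \<in> \<Omega> \<times> \<Omega>"
    by simp
  then obtain l r where r: "l \<in> \<Omega> \<times> \<Omega>" "strict_mono r" "((\<lambda>k. (x k, y k)) \<circ> r) \<longlonglongrightarrow> l"
    by (rule seq_compactE[OF compact_imp_seq_compact[OF compact_Times[OF compact_nonwandering compact_nonwandering]]])
  define a b where "a = fst l" and "b = snd l"
  have ab: "a \<in> \<Omega>" "b \<in> \<Omega>"
    using r(1) by (auto simp: a_def b_def)
  have xa: "(\<lambda>k. x (r k)) \<longlonglongrightarrow> a" and yb: "(\<lambda>k. y (r k)) \<longlonglongrightarrow> b"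
    using tendsto_fst[OF r(3)] tendsto_snd[OF r(3)] by (simp_all add: a_def b_def comp_def)
  have "e \<le> dist a b"
    using LIMSEQ_le_const[OF tendsto_dist[OF xa yb], of e] xy(2) by (simp add: less_imp_le)
  then have "a \<noteq> b"
    using e(1) by auto
  moreover have "(\<lambda>k. 1 / real (Suc (r k))) \<longlonglongrightarrow> 0"
    using LIMSEQ_subseq_LIMSEQ[OF LIMSEQ_inverse_real_of_nat r(2)] by (simp add: comp_def inverse_eq_divide)
  then have "(nonwandering_step X f g)\<^sup>*\<^sup>* a b" if "g > 0" for g
    using nonwandering_chain_related_limit[OF that xa yb _ ab] xy\<Omega> xy(1) by blast
  ultimately show ?thesis
    using that[OF ab] by blast
qed

lemma nonwandering_chain_paths:
  assumes "\<And>k. (nonwandering_step X f (1 / Suc k))\<^sup>*\<^sup>* x y" "x \<noteq> y"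
  obtains c m where "\<forall>k. c k 0 = x \<and> c k (m k) = y \<and> (\<forall>j\<le>m k. c k j \<in> \<Omega>) \<and>
      (\<forall>j<m k. orbit_close f (1 / Suc k) (c k j) (c k (Suc j)))"
proof -
  have "\<exists>c m. c 0 = x \<and> c m = y \<and> (\<forall>j\<le>m. c j \<in> \<Omega>) \<and>
      (\<forall>j<m. orbit_close f (1 / Suc k) (c j) (c (Suc j)))" for k
  proof -
    obtain c m where "c 0 = x" "c m = y" "\<And>j. j \<le> m \<Longrightarrow> c j \<in> \<Omega>"
      "\<And>j. j < m \<Longrightarrow> orbit_close f (1 / Suc k) (c j) (c (Suc j))"
      using nonwandering_chain_path[OF assms(1) assms(2)] by blast
    then show ?thesis
      by blast
  qed
  then show ?thesis
    using that by metis
qed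

lemma pseudo_orbit_through_chain_related:
  assumes "a \<in> \<Omega>" "b \<in> \<Omega>" "a \<noteq> b" "\<And>g. g > 0 \<Longrightarrow> (nonwandering_step X f g)\<^sup>*\<^sup>* a b"
  obtains p where "\<And>t. p t \<in> X" "(\<lambda>t. dist (f (p t)) (p (Suc t))) \<longlonglongrightarrow> 0"
    "\<And>T. \<exists>t\<ge>T. p t = (f ^^ t) a" "\<And>T. \<exists>t\<ge>T. p t = (f ^^ t) b"
proof -
  have chain_ab: "(nonwandering_step X f (1 / Suc k))\<^sup>*\<^sup>* a b" for k
    using assms(4) by simp
  then have chain_ba: "(nonwandering_step X f (1 / Suc k))\<^sup>*\<^sup>* b a" for k
    by (rule sympD[OF symp_rtranclp[OF symp_nonwandering_step]])
  obtain cab mab where ab: "\<forall>k. cab k 0 = a \<and> cab k (mab k) = b \<and> (\<forall>j\<le>mab k. cab k j \<in> \<Omega>) \<and>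
      (\<forall>j<mab k. orbit_close f (1 / Suc k) (cab k j) (cab k (Suc j)))"
    using nonwandering_chain_paths[OF chain_ab assms(3)] by blast
  obtain cba mba where ba: "\<forall>k. cba k 0 = b \<and> cba k (mba k) = a \<and> (\<forall>j\<le>mba k. cba k j \<in> \<Omega>) \<and>
      (\<forall>j<mba k. orbit_close f (1 / Suc k) (cba k j) (cba k (Suc j)))"
    using nonwandering_chain_paths[OF chain_ba] assms(3) by blast
  text \<open>Block \<open>k\<close> has mesh \<open>1/(k+1)\<close> and runs from \<open>a\<close> to \<open>b\<close> for even \<open>k\<close>, back to \<open>a\<close> for odd \<open>k\<close>.\<close>
  define C where "C k = (if even k then cab k else cba k)" for k
  define M where "M k = (if even k then mab k else mba k)" for k
  define p where "p t = (f ^^ t) (C (fst (block_pos M t)) (snd (block_pos M t)))" for t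
  have C: "\<And>k. C k (M k) = C (Suc k) 0" "\<And>k j. j \<le> M k \<Longrightarrow> C k j \<in> X"
      "\<And>k j. j < M k \<Longrightarrow> orbit_close f (1 / Suc k) (C k j) (C k (Suc j))"
    using ab ba nonwandering_subset by (auto simp: C_def M_def)
  have glued: "p t \<in> X" "dist (f (p t)) (p (Suc t)) \<le> 1 / Suc (fst (block_pos M t))" for t
    using glued_pseudo_orbit[of C M "\<lambda>k. 1 / real (Suc k)" p, OF C(1,2) C(3) _ p_def] by simp_all
  have "\<forall>\<^sub>F t in sequentially. norm (dist (f (p t)) (p (Suc t))) \<le> inverse (real (Suc (fst (block_pos M t))))"
    using glued(2) by (simp add: inverse_eq_divide)
  then have "(\<lambda>t. dist (f (p t)) (p (Suc t))) \<longlonglongrightarrow> 0"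
    by (rule Lim_null_comparison[OF _ filterlim_compose[OF LIMSEQ_inverse_real_of_nat filterlim_block_pos_fst]])
  moreover have visit: "\<exists>t\<ge>T. p t = (f ^^ t) (C k 0)" if "T \<le> k" for T k
  proof -
    obtain t where t: "block_pos M t = (k, 0)"
      using block_pos_start by blast
    then have "T \<le> t"
      using block_pos_fst_le[of M t] that by simp
    then show ?thesis
      using t by (auto simp: p_def)
  qed
  have "C (2 * T) 0 = a" "C (Suc (2 * T)) 0 = b" for T
    using ab ba by (simp_all add: C_def)
  then have "\<exists>t\<ge>T. p t = (f ^^ t) a" "\<exists>t\<ge>T. p t = (f ^^ t) b" for T
    using visit[of T "2 * T"] visit[of T "Suc (2 * T)"] by simp_all
  ultimately show ?thesis
    using that glued(1) by blast
qed

lemma limit_shadowing_chain_related_eq: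
  assumes "limit_shadowing X f" "a \<in> \<Omega>" "b \<in> \<Omega>" "\<And>g. g > 0 \<Longrightarrow> (nonwandering_step X f g)\<^sup>*\<^sup>* a b"
  shows "a = b"
proof (rule ccontr)
  assume "a \<noteq> b"
  obtain p where p: "\<And>t. p t \<in> X" "(\<lambda>t. dist (f (p t)) (p (Suc t))) \<longlonglongrightarrow> 0"
    "\<And>T. \<exists>t\<ge>T. p t = (f ^^ t) a" "\<And>T. \<exists>t\<ge>T. p t = (f ^^ t) b"
    using pseudo_orbit_through_chain_related[OF assms(2-3) \<open>a \<noteq> b\<close> assms(4)] by blast
  obtain z where z: "z \<in> X" "(\<lambda>t. dist (p t) ((f ^^ t) z)) \<longlonglongrightarrow> 0"
    using assms(1) p(1,2) unfolding limit_shadowing_def by blast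
  have "dist a b > 0"
    using \<open>a \<noteq> b\<close> by simp
  then obtain d where d: "d > 0"
    "\<And>a' b' z s t. a' \<in> \<Omega> \<Longrightarrow> b' \<in> \<Omega> \<Longrightarrow> z \<in> X \<Longrightarrow> dist ((f ^^ s) a') ((f ^^ s) z) \<le> d
       \<Longrightarrow> dist ((f ^^ t) b') ((f ^^ t) z) \<le> d \<Longrightarrow> dist a' b' < dist a b"
    using nonwandering_close_if_near_common_orbit by blast
  obtain T where T: "\<And>t. T \<le> t \<Longrightarrow> dist (p t) ((f ^^ t) z) < d"
    using z(2) d(1) unfolding lim_sequentially by auto
  obtain s t where "p s = (f ^^ s) a" "p t = (f ^^ t) b" "T \<le> s" "T \<le> t"
    using p(3,4) by blast
  then have "dist ((f ^^ s) a) ((f ^^ s) z) \<le> d" "dist ((f ^^ t) b) ((f ^^ t) z) \<le> d"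
    using T by (metis less_imp_le)+
  then show False
    using d(2) assms(2,3) z(1) by blast
qed

lemma limit_shadowing_imp_small_nonwandering_chains:
  assumes "limit_shadowing X f"
  shows "small_nonwandering_chains X f"
proof (rule ccontr)
  assume "\<not> small_nonwandering_chains X f"
  then show False
  proof (rule nonwandering_chain_related_pair)
    fix a b assume "a \<in> \<Omega>" "b \<in> \<Omega>" "a \<noteq> b" "\<And>g. g > 0 \<Longrightarrow> (nonwandering_step X f g)\<^sup>*\<^sup>* a b"
    then show False
      using limit_shadowing_chain_related_eq[OF assms] by blast
  qed
qed

lemma zero_dimensional_nonwandering_iff_small_chains:
  "zero_dimensional \<Omega> \<longleftrightarrow> small_nonwandering_chains X f"
proof
  assume zd: "zero_dimensional \<Omega>"
  show "small_nonwandering_chains X f"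
    unfolding small_nonwandering_chains_def
  proof (intro allI impI)
    fix e :: real assume "e > 0"
    then obtain g where g: "g > 0"
      "\<And>x y. (\<lambda>a b. a \<in> \<Omega> \<and> b \<in> \<Omega> \<and> dist a b \<le> g)\<^sup>*\<^sup>* x y \<Longrightarrow> dist x y \<le> e"
      using compact_zero_dimensional_small_chains[OF compact_nonwandering zd] by blast
    have "(\<lambda>a b. a \<in> \<Omega> \<and> b \<in> \<Omega> \<and> dist a b \<le> g)\<^sup>*\<^sup>* x y"
      if "(nonwandering_step X f g)\<^sup>*\<^sup>* x y" for x y
      using that by (rule mono_rtranclp[rule_format, rotated])
        (auto simp: nonwandering_step_def orbit_close_dist)
    then show "\<exists>g>0. \<forall>x y. (nonwandering_step X f g)\<^sup>*\<^sup>* x y \<longrightarrow> dist x y \<le> e"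
      using g by blast
  qed
next
  assume small: "small_nonwandering_chains X f"
  show "zero_dimensional \<Omega>"
  proof (rule zero_dimensional_if_small_chains)
    fix e :: real assume "e > 0"
    then obtain g where g: "g > 0" "\<forall>x y. (nonwandering_step X f g)\<^sup>*\<^sup>* x y \<longrightarrow> dist x y \<le> e"
      using small unfolding small_nonwandering_chains_def by blast
    obtain d where "d > 0" "\<And>a b. a \<in> \<Omega> \<Longrightarrow> b \<in> \<Omega> \<Longrightarrow> dist a b \<le> d \<Longrightarrow> nonwandering_step X f g a b"
      using nonwandering_step_if_close[OF g(1)] by blast
    then show "\<exists>R d. d > 0 \<and> (\<forall>a\<in>\<Omega>. \<forall>b\<in>\<Omega>. dist a b < d \<longrightarrow> R a b)
        \<and> (\<forall>x\<in>\<Omega>. \<forall>y\<in>\<Omega>. R\<^sup>*\<^sup>* x y \<longrightarrow> dist x y \<le> e)"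
      using g(2) by (intro exI[of _ "nonwandering_step X f g"] exI[of _ d]) auto
  qed
qed

end

theorem theorem1p2:
  fixes X :: "'a::metric_space set" and f :: "'a \<Rightarrow> 'a"
  assumes "compact X" and "X \<noteq> {}" and "f ` X \<subseteq> X"
    and "equicontinuous_on X f"
  shows "(limit_shadowing X f \<longleftrightarrow> shadowing X f)
       \<and> (shadowing X f \<longleftrightarrow> zero_dimensional (nonwandering X f))
       \<and> (shadowing X f \<longleftrightarrow> totally_disconnected (nonwandering X f))"
proof -
  interpret equicontinuous_system X f
    using assms by unfold_locales
  have small_iff_shadowing: "small_nonwandering_chains X f \<longleftrightarrow> shadowing X f"
    using shadowing_imp_small_nonwandering_chains small_nonwandering_chains_imp_self_shadowing
      self_shadowing_imp_shadowing by blast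
  have "limit_shadowing X f \<longleftrightarrow> small_nonwandering_chains X f"
    using limit_shadowing_imp_small_nonwandering_chains small_nonwandering_chains_imp_self_shadowing
      self_shadowing_imp_limit_shadowing by blast
  moreover have "totally_disconnected \<Omega> \<longleftrightarrow> zero_dimensional \<Omega>"
    using zero_dimensional_imp_totally_disconnected
      compact_totally_disconnected_imp_zero_dimensional[OF compact_nonwandering] by blast
  ultimately show ?thesis
    using small_iff_shadowing zero_dimensional_nonwandering_iff_small_chains by blast
qed

end
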